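(* Hadamard graphs are not distance magic; i.e., no Hadamard graph admits a distance magic labeling.
   Context: For a Hadamard matrix $H=(h_{ij})$ of order $m$ (an $m\times m$ matrix with entries $\pm1$ and $HH^T=mI$), the Hadamard graph has $4m$ vertices $r_i^{+},r_i^{-},c_j^{+},c_j^{-}$ ($1\le i,j\le m$), where $r_i^{+}\sim c_j^{+}$ and $r_i^{-}\sim c_j^{-}$ if $h_{ij}=1$, and $r_i^{+}\sim c_j^{-}$ and $r_i^{-}\sim c_j^{+}$ if $h_{ij}=-1$. A distance magic labeling of a graph $G$ of order $N$ is a bijection $f:V(G)\to\{1,\dots,N\}$ such that $\sum_{y\in N(x)}f(y)$ is the same for every vertex $x$, where $N(x)$ is the open neighborhood of $x$. *)

theory Defs
  imports Main
begin

definition hadamard_matrix :: "nat \<Rightarrow> (nat \<Rightarrow> nat \<Rightarrow> int) \<Rightarrow> bool" where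
  "hadamard_matrix m H \<longleftrightarrow>
     (\<forall>i<m. \<forall>j<m. H i j = 1 \<or> H i j = -1) \<and>
     (\<forall>i<m. \<forall>k<m. (\<Sum>j<m. H i j * H k j) = (if i = k then int m else 0))"

text \<open>Vertices of the Hadamard graph: (is_row, sign, index);
  (True, True, i) = r_i^+, (True, False, i) = r_i^-,
  (False, True, j) = c_j^+, (False, False, j) = c_j^-.\<close>
type_synonym hvert = "bool \<times> bool \<times> nat"

definition hadamard_vertices :: "nat \<Rightarrow> hvert set" where
  "hadamard_vertices m = UNIV \<times> UNIV \<times> {..<m}"

text \<open>r_i^s ~ c_j^t iff (s = t and h_ij = 1) or (s \<noteq> t and h_ij = -1); symmetric.\<close>
definition hadamard_adj :: "nat \<Rightarrow> (nat \<Rightarrow> nat \<Rightarrow> int) \<Rightarrow> hvert \<Rightarrow> hvert \<Rightarrow> bool" where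
  "hadamard_adj m H x y \<longleftrightarrow>
     x \<in> hadamard_vertices m \<and> y \<in> hadamard_vertices m \<and>
     (case (x, y) of ((rx, sx, a), (ry, sy, b)) \<Rightarrow>
        rx \<noteq> ry \<and>
        (let i = (if rx then a else b); j = (if rx then b else a) in
          (sx = sy \<and> H i j = 1) \<or> (sx \<noteq> sy \<and> H i j = -1)))"

definition distance_magic_labeling :: "'a set \<Rightarrow> ('a \<Rightarrow> 'a \<Rightarrow> bool) \<Rightarrow> ('a \<Rightarrow> nat) \<Rightarrow> bool" where
  "distance_magic_labeling V E f \<longleftrightarrow>
     bij_betw f V {1..card V} \<and>
     (\<exists>k. \<forall>x\<in>V. (\<Sum>y\<in>{y\<in>V. E x y}. f y) = k)"

definition distance_magic :: "'a set \<Rightarrow> ('a \<Rightarrow> 'a \<Rightarrow> bool) \<Rightarrow> bool" where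
  "distance_magic V E \<longleftrightarrow> (\<exists>f. distance_magic_labeling V E f)"

end

theory Submission
  imports Defs
begin

text \<open>Comparing the neighbour sums at c_j^+ and c_j^- shows that the vector
  d_i = f(r_i^+) - f(r_i^-) satisfies d H = 0. The rows of a Hadamard matrix are
  orthogonal of squared length m, so H is invertible and d = 0; hence f(r_i^+) = f(r_i^-),
  contradicting injectivity of f.\<close>

lemma orthogonal_rows_left_kernel_trivial:
  fixes H :: "nat \<Rightarrow> nat \<Rightarrow> 'a::idom"
  assumes orth: "\<And>i k. i < m \<Longrightarrow> k < m \<Longrightarrow> (\<Sum>j<m. H i j * H k j) = (if i = k then c else 0)"
    and "c \<noteq> 0"
    and kernel: "\<And>j. j < m \<Longrightarrow> (\<Sum>i<m. H i j * d i) = 0"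
    and "i0 < m"
  shows "d i0 = 0"
proof -
  have "0 = (\<Sum>j<m. H i0 j * (\<Sum>i<m. H i j * d i))"
    using kernel by simp
  also have "\<dots> = (\<Sum>i<m. d i * (\<Sum>j<m. H i0 j * H i j))"
    unfolding sum_distrib_left by (subst sum.swap) (simp add: mult_ac)
  also have "\<dots> = (\<Sum>i<m. if i = i0 then d i * c else 0)"
    by (rule sum.cong) (auto simp: orth \<open>i0 < m\<close>)
  also have "\<dots> = d i0 * c"
    using \<open>i0 < m\<close> by simp
  finally show ?thesis
    using \<open>c \<noteq> 0\<close> by simp
qed

lemma hadamard_matrix_entry:
  assumes "hadamard_matrix m H" "i < m" "j < m"
  shows "H i j = 1 \<or> H i j = -1"
  using assms unfolding hadamard_matrix_def by blast

lemma hadamard_column_neighbours: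
  assumes "hadamard_matrix m H" "j < m"
  shows "{y \<in> hadamard_vertices m. hadamard_adj m H (False, s, j) y}
        = (\<lambda>i. (True, s = (H i j = 1), i)) ` {..<m}"
proof (intro set_eqI iffI)
  fix y assume "y \<in> {y \<in> hadamard_vertices m. hadamard_adj m H (False, s, j) y}"
  then obtain t i where "y = (True, t, i)" "i < m"
      "(s = t \<and> H i j = 1) \<or> (s \<noteq> t \<and> H i j = -1)"
    by (cases y) (auto simp: hadamard_adj_def hadamard_vertices_def)
  then show "y \<in> (\<lambda>i. (True, s = (H i j = 1), i)) ` {..<m}"
    by (auto intro!: image_eqI[where x = i])
next
  fix y assume "y \<in> (\<lambda>i. (True, s = (H i j = 1), i)) ` {..<m}"
  then obtain i where "i < m" "y = (True, s = (H i j = 1), i)"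
    by auto
  then show "y \<in> {y \<in> hadamard_vertices m. hadamard_adj m H (False, s, j) y}"
    using hadamard_matrix_entry[OF assms(1) \<open>i < m\<close> assms(2)] assms(2)
    by (auto simp: hadamard_adj_def hadamard_vertices_def)
qed

lemma hadamard_column_neighbour_sum:
  assumes "hadamard_matrix m H" "j < m"
  shows "(\<Sum>y\<in>{y \<in> hadamard_vertices m. hadamard_adj m H (False, s, j) y}. f y)
        = (\<Sum>i<m. f (True, s = (H i j = 1), i))"
  unfolding hadamard_column_neighbours[OF assms]
  by (subst sum.reindex) (auto simp: inj_on_def)

lemma hadamard_magic_row_difference_kernel:
  assumes "hadamard_matrix m H" "j < m"
    and magic: "\<And>x. x \<in> hadamard_vertices m \<Longrightarrow>
        (\<Sum>y\<in>{y \<in> hadamard_vertices m. hadamard_adj m H x y}. f y) = k"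
  shows "(\<Sum>i<m. H i j * (int (f (True, True, i)) - int (f (True, False, i)))) = 0"
proof -
  let ?g = "\<lambda>s i. int (f (True, s = (H i j = 1), i))"
  have sums: "(\<Sum>i<m. ?g s i) = int k" for s
    using magic[of "(False, s, j)"] hadamard_column_neighbour_sum[OF assms(1,2), where s = s and f = f] \<open>j < m\<close>
    by (simp add: hadamard_vertices_def flip: of_nat_sum)
  have "0 = (\<Sum>i<m. ?g True i - ?g False i)"
    by (simp only: sum_subtractf sums diff_self)
  also have "\<dots> = (\<Sum>i<m. H i j * (int (f (True, True, i)) - int (f (True, False, i))))"
  proof (rule sum.cong)
    fix i assume "i \<in> {..<m}"
    then consider "H i j = 1" | "H i j = -1"
      using hadamard_matrix_entry[OF assms(1) _ \<open>j < m\<close>] by blast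
    then show "?g True i - ?g False i = H i j * (int (f (True, True, i)) - int (f (True, False, i)))"
      by cases simp_all
  qed simp
  finally show ?thesis
    by simp
qed

theorem corollary2p8:
  fixes m :: nat and H :: "nat \<Rightarrow> nat \<Rightarrow> int"
  assumes "m \<ge> 1" and "hadamard_matrix m H"
  shows "\<not> distance_magic (hadamard_vertices m) (hadamard_adj m H)"
proof
  assume "distance_magic (hadamard_vertices m) (hadamard_adj m H)"
  then obtain f k where bij: "bij_betw f (hadamard_vertices m) {1..card (hadamard_vertices m)}"
    and magic: "\<And>x. x \<in> hadamard_vertices m \<Longrightarrow>
        (\<Sum>y\<in>{y \<in> hadamard_vertices m. hadamard_adj m H x y}. f y) = k"
    unfolding distance_magic_def distance_magic_labeling_def by blast
  define d where "d i = int (f (True, True, i)) - int (f (True, False, i))" for i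
  have "d 0 = 0"
  proof (rule orthogonal_rows_left_kernel_trivial)
    show "\<And>i k. i < m \<Longrightarrow> k < m \<Longrightarrow> (\<Sum>j<m. H i j * H k j) = (if i = k then int m else 0)"
      using assms(2) unfolding hadamard_matrix_def by blast
    show "\<And>j. j < m \<Longrightarrow> (\<Sum>i<m. H i j * d i) = 0"
      unfolding d_def using hadamard_magic_row_difference_kernel[OF assms(2) _ magic] by blast
  qed (use assms(1) in auto)
  then have "f (True, True, 0) = f (True, False, 0)"
    by (simp add: d_def)
  moreover have "(True, True, 0) \<in> hadamard_vertices m" "(True, False, 0) \<in> hadamard_vertices m"
    using assms(1) by (simp_all add: hadamard_vertices_def)
  ultimately have "(True, True, 0) = (True, False, 0 :: nat)"
    by (rule inj_onD[OF bij_betw_imp_inj_on[OF bij]])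
  then show False
    by simp
qed

end
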